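(* Let $W\in\mathbb{Z}$ with $W\neq 0$ and let $\alpha\in\mathbb{R}$. Let $\Theta_1,\Theta_2$ be independent random variables, each uniformly distributed on $(-\pi,\pi]$, and set $\Phi_i:=\alpha+W\,\Theta_i \pmod{2\pi}$ for $i=1,2$. Then the weighted toroidal Kendall coefficient of the pair $(\Theta,\Phi)$, $$\tau_1=\frac{\mathbb{E}\big[\operatorname{wrap}_\pi(\Theta_2-\Theta_1)\,\mathrm{sign}\big(\operatorname{wrap}_\pi(\Phi_2-\Phi_1)\big)\big]}{\mathbb{E}\big[|\operatorname{wrap}_\pi(\Theta_2-\Theta_1)|\big]},$$ is well defined (the denominator is nonzero) and equals $$\tau_1=\frac{(-1)^{W+1}}{W}.$$ In particular $|\tau_1|=1/|W|$.
   Context: For $x\in\mathbb{R}$, the wrapped difference is $\operatorname{wrap}_\pi(x):=x-2\pi\left\lfloor\frac{x+\pi}{2\pi}\right\rfloor\in[-\pi,\pi)$; angles are interpreted modulo $2\pi$, so $\operatorname{wrap}_\pi(\Phi_2-\Phi_1)=\operatorname{wrap}_\pi(W(\Theta_2-\Theta_1))$. Here $\mathrm{sign}(y)=1$ for $y>0$, $-1$ for $y<0$, $0$ for $y=0$. In general, for a random pair $(\Theta,\Phi)$ of angles with i.i.d. copies $(\Theta_1,\Phi_1),(\Theta_2,\Phi_2)$, the weighted toroidal Kendall coefficient $\tau_1$ is defined by the displayed ratio, assuming the denominator is nonzero. *)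

theory Defs
  imports "HOL-Probability.Probability"
begin

definition wrap_pi :: "real \<Rightarrow> real" where
  "wrap_pi x = x - 2 * pi * of_int \<lfloor>(x + pi) / (2 * pi)\<rfloor>"

definition tau1 :: "'a measure \<Rightarrow> ('a \<Rightarrow> real) \<Rightarrow> ('a \<Rightarrow> real) \<Rightarrow> ('a \<Rightarrow> real) \<Rightarrow> ('a \<Rightarrow> real) \<Rightarrow> real" where
  "tau1 M Th1 Ph1 Th2 Ph2 =
     (\<integral>\<omega>. wrap_pi (Th2 \<omega> - Th1 \<omega>) * sgn (wrap_pi (Ph2 \<omega> - Ph1 \<omega>)) \<partial>M) /
     (\<integral>\<omega>. \<bar>wrap_pi (Th2 \<omega> - Th1 \<omega>)\<bar> \<partial>M)"

end

theory Submission
  imports Defs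
begin

(* Both expectations have the form E g(Theta_2 - Theta_1) with g 2pi-periodic: the numerator
   because Phi_2 - Phi_1 = W (Theta_2 - Theta_1), the denominator because |v| = v sgn v makes it
   the numerator for W = 1.  As Theta_2 is uniform and independent of Theta_1, the inner integral
   over Theta_2 is the mean of g over a full period whatever the value of Theta_1, so
   E g(Theta_2 - Theta_1) = (1/2pi) int_{-pi}^{pi} g.  For g x = wrap x sgn(wrap(W x)), the
   substitution u = W x turns this integral into W^-2 int_{-W pi}^{W pi} u sgn(wrap u) du, and on
   each half period (k pi, (k+1) pi) the sign is (-1)^k, so the integral telescopes to
   (-1)^(W+1) W pi^2. *)

lemma minus_one_power_int_if: "(-1 :: real) powi k = (if even k then 1 else -1)"
  by (simp add: power_int_minus_left)

lemma wrap_pi_measurable [measurable]: "wrap_pi \<in> borel_measurable borel"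
  unfolding wrap_pi_def by measurable

lemma wrap_pi_add_2pi_multiple: "wrap_pi (x + 2 * pi * of_int k) = wrap_pi x"
proof -
  have "(x + 2 * pi * of_int k + pi) / (2 * pi) = (x + pi) / (2 * pi) + of_int k"
    by (simp add: field_simps)
  then show ?thesis
    unfolding wrap_pi_def by (simp add: algebra_simps)
qed

lemma wrap_pi_eq_self: "-pi \<le> x \<Longrightarrow> x < pi \<Longrightarrow> wrap_pi x = x"
  unfolding wrap_pi_def by (simp add: floor_eq_iff field_simps)

lemma abs_wrap_pi_le: "\<bar>wrap_pi x\<bar> \<le> pi"
proof -
  define k where "k = \<lfloor>(x + pi) / (2 * pi)\<rfloor>"
  have "of_int k \<le> (x + pi) / (2 * pi)" "(x + pi) / (2 * pi) < of_int k + 1"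
    unfolding k_def by linarith+
  then show ?thesis
    unfolding wrap_pi_def k_def[symmetric] by (simp add: field_simps abs_le_iff)
qed

lemma sgn_wrap_pi:
  assumes "of_int j * pi < y" "y < (of_int j + 1) * pi"
  shows "sgn (wrap_pi y) = (-1) powi j"
proof -
  define m where "m = (j + 1) div 2"
  have shift: "wrap_pi y = y - 2 * pi * of_int m"
    if "-pi < y - 2 * pi * of_int m" "y - 2 * pi * of_int m < pi"
    using that wrap_pi_add_2pi_multiple[of "y - 2 * pi * of_int m" m] wrap_pi_eq_self by simp
  have "j = 2 * m \<or> j = 2 * m - 1"
    unfolding m_def by presburger
  then show ?thesis
  proof
    assume j: "j = 2 * m"
    have "0 < y - 2 * pi * of_int m" "y - 2 * pi * of_int m < pi"
      using assms unfolding j by (simp_all add: algebra_simps)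
    with j show ?thesis
      using shift by (simp add: minus_one_power_int_if)
  next
    assume j: "j = 2 * m - 1"
    have "-pi < y - 2 * pi * of_int m" "y - 2 * pi * of_int m < 0"
      using assms unfolding j by (simp_all add: algebra_simps)
    with j show ?thesis
      using shift by (simp add: minus_one_power_int_if)
  qed
qed

lemma interval_integrable_bounded:
  fixes g :: "real \<Rightarrow> real" and a b :: real
  assumes [measurable]: "g \<in> borel_measurable borel"
    and bound: "\<And>x. x \<in> {min a b..max a b} \<Longrightarrow> \<bar>g x\<bar> \<le> B"
  shows "interval_lebesgue_integrable lborel a b g"
proof -
  have "set_integrable lborel {min a b<..<max a b} g"
    unfolding set_integrable_def
    by (rule integrableI_bounded_set[where A="{min a b<..<max a b}" and B=B])
       (auto simp: bound indicator_def)
  then show ?thesis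
    by (auto simp: interval_lebesgue_integrable_def min_def max_def split: if_splits)
qed

lemma interval_integral_real_affine:
  fixes f :: "real \<Rightarrow> real" and a b c t :: real
  assumes "c \<noteq> 0"
  shows "(LBINT x=a..b. f (t + c * x)) = (LBINT u=t+c*a..t+c*b. f u) / c"
proof -
  have "(LBINT x=a..b. f (t + c * x)) = (LBINT u=t+c*a..t+c*b. f u) / c" if "a < b" for a b
  proof (cases "c > 0")
    case True
    have "(LBINT u:{t+c*a<..<t+c*b}. f u) = c * (LBINT x:{a<..<b}. f (t + c * x))"
      unfolding set_lebesgue_integral_def
      using True by (subst lborel_integral_real_affine[OF assms, of _ t])
        (auto intro!: Bochner_Integration.integral_cong split: split_indicator)
    then show ?thesis
      using True that by (simp add: interval_lebesgue_integral_def)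
  next
    case False
    then have "c < 0" using assms by simp
    have "(LBINT u:{t+c*b<..<t+c*a}. f u) = - c * (LBINT x:{a<..<b}. f (t + c * x))"
      unfolding set_lebesgue_integral_def
      using \<open>c < 0\<close> by (subst lborel_integral_real_affine[OF assms, of _ t])
        (auto intro!: Bochner_Integration.integral_cong split: split_indicator)
    then show ?thesis
      using \<open>c < 0\<close> that by (simp add: interval_lebesgue_integral_def)
  qed
  from this[of a b] this[of b a] show ?thesis
    by (cases a b rule: linorder_cases)
       (auto simp: interval_integral_endpoints_reverse[of a b]
         interval_integral_endpoints_reverse[of "t+c*a" "t+c*b"])
qed

lemma interval_integral_periodic:
  fixes g :: "real \<Rightarrow> real" and a b p :: real
  assumes [measurable]: "g \<in> borel_measurable borel"
    and bound: "\<And>x. \<bar>g x\<bar> \<le> B" and periodic: "\<And>x. g (x + p) = g x"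
  shows "(LBINT x=a..a+p. g x) = (LBINT x=b..b+p. g x)"
proof -
  (* [a, a+p] and [b, b+p] share [b, a+p], and the remaining pieces [a, b] and [a+p, b+p]
     agree by periodicity; with oriented integrals this needs no case split on a, b. *)
  have sum: "(LBINT x=u..v. g x) + (LBINT x=v..w. g x) = (LBINT x=u..w. g x)" for u v w :: real
    using interval_integrable_bounded[OF assms(1) bound, of "min u (min v w)" "max u (max v w)"]
    by (intro interval_integral_sum) simp
  have "(LBINT x=a+p..b+p. g x) = (LBINT x=a..b. g x)"
    using interval_integral_real_affine[where c=1 and t=p and f=g] periodic by (simp add: add.commute)
  then show ?thesis
    using sum[of a b "a+p"] sum[of b "a+p" "b+p"] by linarith
qed

lemma integral_uniform_measure:
  fixes f :: "'a \<Rightarrow> real"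
  assumes [measurable]: "A \<in> sets M" "f \<in> borel_measurable M"
    and "emeasure M A \<noteq> 0" "emeasure M A \<noteq> \<infinity>"
  shows "integral\<^sup>L (uniform_measure M A) f = (LINT x:A|M. f x) / measure M A"
proof -
  have A: "emeasure M A = ennreal (measure M A)" "measure M A > 0"
    using assms(3,4) by (auto simp: emeasure_eq_ennreal_measure less_le)
  have "uniform_measure M A = density M (\<lambda>x. ennreal (indicator A x / measure M A))"
    unfolding uniform_measure_def A(1) using A(2) divide_ennreal[of 1 "measure M A"]
    by (intro density_cong) (auto simp: indicator_def)
  then show ?thesis
    using A(2) by (simp add: integral_density set_lebesgue_integral_def)
qed

lemma (in prob_space) expectation_indep_var_iterated:
  fixes X Y :: "'a \<Rightarrow> real" and f :: "real \<times> real \<Rightarrow> real"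
  assumes indep: "indep_var borel X borel Y"
    and f_measurable: "f \<in> borel_measurable (borel \<Otimes>\<^sub>M borel)"
    and bound: "\<And>z. \<bar>f z\<bar> \<le> B"
  shows "expectation (\<lambda>\<omega>. f (X \<omega>, Y \<omega>))
    = (\<integral>x. (\<integral>y. f (x, y) \<partial>distr M borel Y) \<partial>distr M borel X)"
proof -
  have [measurable]: "X \<in> borel_measurable M" "Y \<in> borel_measurable M"
    using indep by (auto simp: indep_var_distribution_eq)
  interpret X: prob_space "distr M borel X"
    by (rule prob_space_distr) simp
  interpret Y: prob_space "distr M borel Y"
    by (rule prob_space_distr) simp
  interpret XY: pair_prob_space "distr M borel X" "distr M borel Y" ..
  have "sets (distr M borel X \<Otimes>\<^sub>M distr M borel Y) = sets (borel \<Otimes>\<^sub>M borel)"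
    by (intro sets_pair_measure_cong) simp_all
  then have f_measurable_XY: "f \<in> borel_measurable (distr M borel X \<Otimes>\<^sub>M distr M borel Y)"
    using f_measurable measurable_cong_sets by blast
  have "expectation (\<lambda>\<omega>. f (X \<omega>, Y \<omega>))
      = integral\<^sup>L (distr M (borel \<Otimes>\<^sub>M borel) (\<lambda>\<omega>. (X \<omega>, Y \<omega>))) f"
    by (simp add: integral_distr f_measurable)
  also have "\<dots> = integral\<^sup>L (distr M borel X \<Otimes>\<^sub>M distr M borel Y) f"
    using indep by (simp add: indep_var_distribution_eq)
  also have "\<dots> = (\<integral>x. (\<integral>y. f (x, y) \<partial>distr M borel Y) \<partial>distr M borel X)"
    by (intro XY.integral_fst'[symmetric] XY.P.integrable_const_bound[where B=B])
       (simp_all add: bound f_measurable_XY)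
  finally show ?thesis .
qed

lemma (in prob_space) expectation_periodic_difference_uniform:
  fixes X Y :: "'a \<Rightarrow> real" and g :: "real \<Rightarrow> real" and a b :: real
  assumes indep: "indep_var borel X borel Y"
    and Y: "distr M borel Y = uniform_measure lborel {a<..b}" and "a < b"
    and g_measurable [measurable]: "g \<in> borel_measurable borel"
    and bound: "\<And>x. \<bar>g x\<bar> \<le> B" and periodic: "\<And>x. g (x + (b - a)) = g x"
  shows "expectation (\<lambda>\<omega>. g (Y \<omega> - X \<omega>)) = (LBINT x=a..b. g x) / (b - a)"
proof -
  have mean: "(\<integral>y. g (y - x) \<partial>uniform_measure lborel {a<..b}) = (LBINT y=a..b. g y) / (b - a)" for x
  proof -
    have "(\<integral>y. g (y - x) \<partial>uniform_measure lborel {a<..b}) = (LBINT y=a..b. g (y - x)) / (b - a)"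
      using \<open>a < b\<close> by (simp add: integral_uniform_measure interval_integral_Ioc)
    also have "\<dots> = (LBINT y=a-x..(a-x)+(b-a). g y) / (b - a)"
      using interval_integral_real_affine[where c=1 and t="-x" and f=g, of a b] by simp
    also have "\<dots> = (LBINT y=a..a+(b-a). g y) / (b - a)"
      using interval_integral_periodic[where g=g, OF g_measurable bound periodic, of "a - x" a] by simp
    finally show ?thesis by simp
  qed
  have "random_variable borel X"
    using indep by (simp add: indep_var_distribution_eq)
  then interpret X: prob_space "distr M borel X"
    by (rule prob_space_distr)
  have "expectation (\<lambda>\<omega>. g (Y \<omega> - X \<omega>))
      = (\<integral>x. (\<integral>y. g (y - x) \<partial>distr M borel Y) \<partial>distr M borel X)"
    using expectation_indep_var_iterated[OF indep, of "\<lambda>z. g (snd z - fst z)" B] bound by simp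
  also have "\<dots> = (LBINT x=a..b. g x) / (b - a)"
    using X.prob_space by (simp add: Y mean)
  finally show ?thesis .
qed

lemma interval_integral_mult_sgn_wrap_pi_half_period:
  fixes j :: int
  shows "(LBINT u = of_int j*pi..(of_int j+1)*pi. u * sgn (wrap_pi u))
    = (-1) powi j * (2 * of_int j + 1) * pi^2 / 2"
proof -
  have "(LBINT u = of_int j*pi..(of_int j+1)*pi. u * sgn (wrap_pi u))
      = (LBINT u = of_int j*pi..(of_int j+1)*pi. (-1) powi j * u)"
    by (rule interval_integral_cong) (auto simp: einterval_iff min_def max_def sgn_wrap_pi)
  also have "\<dots> = (-1) powi j * ((of_int j+1)*pi)^2/2 - (-1) powi j * (of_int j*pi)^2/2"
    by (rule interval_integral_FTC_finite)
       (auto intro!: derivative_eq_intros continuous_on_mult_left continuous_on_id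
         simp flip: has_real_derivative_iff_has_vector_derivative)
  finally show ?thesis
    by (simp add: power2_eq_square algebra_simps)
qed

lemma interval_integral_mult_sgn_wrap_pi_sum:
  fixes u v w :: real
  shows "(LBINT x=u..v. x * sgn (wrap_pi x)) + (LBINT x=v..w. x * sgn (wrap_pi x))
    = (LBINT x=u..w. x * sgn (wrap_pi x))"
proof -
  have "interval_lebesgue_integrable lborel (min u (min v w)) (max u (max v w)) (\<lambda>x. x * sgn (wrap_pi x))"
  proof (rule interval_integrable_bounded[where B="\<bar>u\<bar> + \<bar>v\<bar> + \<bar>w\<bar>"])
    fix x assume "x \<in> {min (min u (min v w)) (max u (max v w))..max (min u (min v w)) (max u (max v w))}"
    then have "\<bar>x\<bar> \<le> \<bar>u\<bar> + \<bar>v\<bar> + \<bar>w\<bar>"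
      by auto
    then show "\<bar>x * sgn (wrap_pi x)\<bar> \<le> \<bar>u\<bar> + \<bar>v\<bar> + \<bar>w\<bar>"
      by (simp add: abs_mult abs_sgn_eq)
  qed simp
  then show ?thesis
    by (intro interval_integral_sum) simp
qed

lemma interval_integral_mult_sgn_wrap_pi_symmetric:
  fixes W :: int
  shows "(LBINT u=-(of_int W*pi)..of_int W*pi. u * sgn (wrap_pi u)) = (-1) powi (W+1) * of_int W * pi^2"
proof -
  define I where "I a b = (LBINT u=a..b. u * sgn (wrap_pi u))" for a b :: real
  have half_period: "I (of_int j * pi) ((of_int j + 1) * pi) = (-1) powi j * (2 * of_int j + 1) * pi^2 / 2" for j
    unfolding I_def by (rule interval_integral_mult_sgn_wrap_pi_half_period)
  have nat: "I (-(real n * pi)) (real n * pi) = (-1) powi (int n + 1) * real n * pi^2" for n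
  proof (induction n)
    case (Suc n)
    have left: "of_int (- int n - 1) * pi = -(real (Suc n) * pi)" "(of_int (- int n - 1) + 1) * pi = -(real n * pi)"
      and right: "of_int (int n) * pi = real n * pi" "(of_int (int n) + 1) * pi = real (Suc n) * pi"
      by (simp_all add: algebra_simps)
    have "I (-(real (Suc n) * pi)) (real (Suc n) * pi)
        = I (-(real (Suc n) * pi)) (-(real n * pi)) + I (-(real n * pi)) (real n * pi)
          + I (real n * pi) (real (Suc n) * pi)"
      unfolding I_def by (simp only: interval_integral_mult_sgn_wrap_pi_sum)
    also have "\<dots> = (-1) powi (int (Suc n) + 1) * real (Suc n) * pi^2"
      using half_period[of "- int n - 1", unfolded left] half_period[of "int n", unfolded right] Suc.IH
      by (cases "even n"; simp add: minus_one_power_int_if minus_one_power_iff algebra_simps; linarith)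
    finally show ?case .
  qed (simp add: I_def)
  have "I (-(of_int W * pi)) (of_int W * pi) = (-1) powi (W+1) * of_int W * pi^2"
  proof (cases "W \<ge> 0")
    case True
    then show ?thesis using nat[of "nat W"] by simp
  next
    case False
    then have "I (of_int W * pi) (-(of_int W * pi)) = (-1) powi (- W + 1) * (- of_int W) * pi^2"
      using nat[of "nat (-W)"] by simp
    moreover have "I (-(of_int W * pi)) (of_int W * pi) = - I (of_int W * pi) (-(of_int W * pi))"
      unfolding I_def by (rule interval_integral_endpoints_reverse)
    ultimately show ?thesis
      by (simp add: minus_one_power_int_if)
  qed
  then show ?thesis
    by (simp add: I_def)
qed

lemma interval_integral_wrap_pi_mult_sgn_wrap_pi_scaled:
  fixes W :: int
  assumes "W \<noteq> 0"
  shows "(LBINT x=-pi..pi. wrap_pi x * sgn (wrap_pi (of_int W * x))) = (-1) powi (W + 1) * pi^2 / of_int W"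
proof -
  have "(LBINT x=-pi..pi. wrap_pi x * sgn (wrap_pi (of_int W * x)))
      = (LBINT x=-pi..pi. x * sgn (wrap_pi (of_int W * x)))"
    by (intro interval_integral_cong) (auto simp: einterval_iff min_def max_def wrap_pi_eq_self)
  also have "\<dots> = (LBINT x=-pi..pi. (0 + of_int W * x) * sgn (wrap_pi (0 + of_int W * x))) / of_int W"
    using assms by (simp add: mult.assoc)
  also have "\<dots> = (LBINT u=-(of_int W*pi)..of_int W*pi. u * sgn (wrap_pi u)) / of_int W ^ 2"
    using assms
    by (subst interval_integral_real_affine[where c="of_int W" and t=0 and f="\<lambda>u. u * sgn (wrap_pi u)"])
       (simp_all add: power2_eq_square)
  also have "\<dots> = (-1) powi (W + 1) * pi^2 / of_int W"
    using assms by (simp add: interval_integral_mult_sgn_wrap_pi_symmetric power2_eq_square)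
  finally show ?thesis .
qed

lemma (in prob_space) expectation_wrap_pi_mult_sgn_wrap_pi_scaled:
  fixes X Y :: "'a \<Rightarrow> real" and W :: int
  assumes "indep_var borel X borel Y"
    and "distr M borel Y = uniform_measure lborel {-pi<..pi}" and "W \<noteq> 0"
  shows "expectation (\<lambda>\<omega>. wrap_pi (Y \<omega> - X \<omega>) * sgn (wrap_pi (of_int W * (Y \<omega> - X \<omega>))))
    = (-1) powi (W + 1) * pi / (2 * of_int W)"
proof -
  define g where "g x = wrap_pi x * sgn (wrap_pi (of_int W * x))" for x
  have "\<bar>g x\<bar> \<le> pi" for x
    using abs_wrap_pi_le[of x] by (simp add: g_def abs_mult abs_sgn_eq)
  moreover have "g (x + (pi - - pi)) = g x" for x
    using wrap_pi_add_2pi_multiple[of x 1] wrap_pi_add_2pi_multiple[of "of_int W * x" W]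
    by (simp add: g_def algebra_simps)
  ultimately have "expectation (\<lambda>\<omega>. g (Y \<omega> - X \<omega>)) = (LBINT x=-pi..pi. g x) / (pi - - pi)"
    using assms by (intro expectation_periodic_difference_uniform) (auto simp: g_def)
  then show ?thesis
    using assms by (simp add: g_def interval_integral_wrap_pi_mult_sgn_wrap_pi_scaled power2_eq_square)
qed

theorem theorem1:
  fixes M :: "'a measure" and Th1 Th2 :: "'a \<Rightarrow> real" and W :: int and \<alpha> :: real
  assumes "prob_space M"
    and "W \<noteq> 0"
    and "prob_space.indep_var M borel Th1 borel Th2"
    and "Th1 \<in> borel_measurable M" and "Th2 \<in> borel_measurable M"
    and "distr M borel Th1 = uniform_measure lborel {-pi<..pi}"
    and "distr M borel Th2 = uniform_measure lborel {-pi<..pi}"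
  shows "(\<integral>\<omega>. \<bar>wrap_pi (Th2 \<omega> - Th1 \<omega>)\<bar> \<partial>M) \<noteq> 0
       \<and> tau1 M Th1 (\<lambda>\<omega>. \<alpha> + of_int W * Th1 \<omega>) Th2 (\<lambda>\<omega>. \<alpha> + of_int W * Th2 \<omega>)
           = (-1) powi (W + 1) / of_int W
       \<and> \<bar>tau1 M Th1 (\<lambda>\<omega>. \<alpha> + of_int W * Th1 \<omega>) Th2 (\<lambda>\<omega>. \<alpha> + of_int W * Th2 \<omega>)\<bar>
           = 1 / \<bar>of_int W\<bar>"
proof -
  interpret prob_space M by fact
  note expectation = expectation_wrap_pi_mult_sgn_wrap_pi_scaled[OF assms(3,7)]
  have "\<bar>v\<bar> = v * sgn v" for v :: real
    by (simp add: sgn_if)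
  then have denominator: "(\<integral>\<omega>. \<bar>wrap_pi (Th2 \<omega> - Th1 \<omega>)\<bar> \<partial>M) = pi / 2"
    using expectation[of 1] by simp
  have "(\<alpha> + of_int W * Th2 \<omega>) - (\<alpha> + of_int W * Th1 \<omega>) = of_int W * (Th2 \<omega> - Th1 \<omega>)" for \<omega>
    by (simp add: algebra_simps)
  then have tau: "tau1 M Th1 (\<lambda>\<omega>. \<alpha> + of_int W * Th1 \<omega>) Th2 (\<lambda>\<omega>. \<alpha> + of_int W * Th2 \<omega>)
      = (-1) powi (W + 1) / of_int W"
    unfolding tau1_def denominator using expectation[OF assms(2)] by simp
  show ?thesis
    unfolding tau denominator by (simp add: minus_one_power_int_if)
qed

end
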